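(* Let $A$ be a $0$-$1$ matrix over a set $\mathcal G$. Under the isomorphism $\tilde R_A\cong C(\tilde\Gamma_A)$, $f\mapsto\hat f$, one has $\mathfrak R_A\cong C_0(\Gamma_A;\mathbb Z)$ and $\tilde{\mathfrak R}_A\cong C(\tilde\Gamma_A;\mathbb Z)$ (the integer-valued continuous functions, vanishing at infinity in the first case).
   Context: $\rho_i(j)=A(i,j)$ (rows of $A$) and $\delta_i=$ indicator of $\{i\}$, functions on $\mathcal G$. $R_A\subset\ell^\infty(\mathcal G)$ is the $C^*$-algebra generated by all $\rho_i,\delta_i$ and $\tilde R_A$ the one generated by these and $\mathbf 1$. $\mathfrak R_A\subset\mathbb Z^{\mathcal G}$ is the ring generated by $\{\delta_i,\rho_i:i\in\mathcal G\}$, and $\tilde{\mathfrak R}_A$ the ring generated by these and $\mathbf 1$. $\tilde{\mathcal G}=\mathcal G\cup\{\star\}$ is the one-point compactification of discrete $\mathcal G$; $c_j(i)=A(i,j)$; $\tilde\Gamma_A$ is the closure of $\{(j,c_j):j\in\mathcal G\}$ in $\tilde{\mathcal G}\times\{0,1\}^{\mathcal G}$ and $\Gamma_A=\tilde\Gamma_A\setminus\{(\star,\mathbf 0)\}$. It is known that, identifying $j$ with $(j,c_j)$, each $f\in\tilde R_A$ has a unique continuous extension $\hat f$ to $\tilde\Gamma_A$, and $f\mapsto\hat f$ is an isomorphism $\tilde R_A\cong C(\tilde\Gamma_A)$ carrying $R_A$ onto $C_0(\Gamma_A)$. *)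

theory Defs
  imports "HOL-Analysis.Analysis"
begin

text \<open>A 0-1 matrix over the index set G (the type 'a) is A :: 'a => 'a => bool.
  The one-point compactification of discrete G is modelled on 'a option,
  with None playing the role of the point at infinity (star).\<close>

definition opt_open :: "'a option set \<Rightarrow> bool" where
  "opt_open U \<longleftrightarrow> (None \<in> U \<longrightarrow> finite (- U))"

lemma istopology_opt_open: "istopology opt_open"
proof -
  have "finite (- \<Union>K)" if "\<forall>U\<in>K. None \<in> U \<longrightarrow> finite (- U)" "None \<in> \<Union>K"
    for K :: "'a option set set"
  proof -
    from that obtain U where U: "U \<in> K" "None \<in> U" by auto
    with that have "finite (- U)" by auto
    moreover have "- \<Union>K \<subseteq> - U" using U by auto
    ultimately show ?thesis by (rule finite_subset[rotated])
  qed
  then show ?thesis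
    unfolding istopology_def opt_open_def by (auto simp: Compl_Int)
qed

definition opt_top :: "'a option topology" where
  "opt_top = topology opt_open"

definition ambient :: "('a option \<times> ('a \<Rightarrow> bool)) topology" where
  "ambient = prod_topology opt_top (product_topology (\<lambda>_. discrete_topology UNIV) UNIV)"

definition col :: "('a \<Rightarrow> 'a \<Rightarrow> bool) \<Rightarrow> 'a \<Rightarrow> 'a \<Rightarrow> bool" where
  "col A j = (\<lambda>i. A i j)"

definition emb :: "('a \<Rightarrow> 'a \<Rightarrow> bool) \<Rightarrow> 'a \<Rightarrow> 'a option \<times> ('a \<Rightarrow> bool)" where
  "emb A j = (Some j, col A j)"

definition star_pt :: "'a option \<times> ('a \<Rightarrow> bool)" where
  "star_pt = (None, (\<lambda>_. False))"

definition GammaT :: "('a \<Rightarrow> 'a \<Rightarrow> bool) \<Rightarrow> ('a option \<times> ('a \<Rightarrow> bool)) set" where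
  "GammaT A = ambient closure_of (range (emb A))"

definition Gamma :: "('a \<Rightarrow> 'a \<Rightarrow> bool) \<Rightarrow> ('a option \<times> ('a \<Rightarrow> bool)) set" where
  "Gamma A = GammaT A - {star_pt}"

definition rho :: "('a \<Rightarrow> 'a \<Rightarrow> bool) \<Rightarrow> 'a \<Rightarrow> 'a \<Rightarrow> int" where
  "rho A i = (\<lambda>j. of_bool (A i j))"

definition delta :: "'a \<Rightarrow> 'a \<Rightarrow> int" where
  "delta i = (\<lambda>j. of_bool (j = i))"

inductive_set ring_gen :: "('a \<Rightarrow> int) set \<Rightarrow> ('a \<Rightarrow> int) set" for S where
  gen: "f \<in> S \<Longrightarrow> f \<in> ring_gen S"
| zero: "(\<lambda>_. 0) \<in> ring_gen S"
| neg: "f \<in> ring_gen S \<Longrightarrow> (\<lambda>x. - f x) \<in> ring_gen S"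
| add: "f \<in> ring_gen S \<Longrightarrow> g \<in> ring_gen S \<Longrightarrow> (\<lambda>x. f x + g x) \<in> ring_gen S"
| mult: "f \<in> ring_gen S \<Longrightarrow> g \<in> ring_gen S \<Longrightarrow> (\<lambda>x. f x * g x) \<in> ring_gen S"

definition ringR :: "('a \<Rightarrow> 'a \<Rightarrow> bool) \<Rightarrow> ('a \<Rightarrow> int) set" where
  "ringR A = ring_gen ({delta i | i. True} \<union> {rho A i | i. True})"

definition ringRT :: "('a \<Rightarrow> 'a \<Rightarrow> bool) \<Rightarrow> ('a \<Rightarrow> int) set" where
  "ringRT A = ring_gen ({delta i | i. True} \<union> {rho A i | i. True} \<union> {(\<lambda>_. 1)})"

definition CZ :: "('a \<Rightarrow> 'a \<Rightarrow> bool) \<Rightarrow> ('a option \<times> ('a \<Rightarrow> bool) \<Rightarrow> int) set" where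
  "CZ A = {g. continuous_map (subtopology ambient (GammaT A)) euclidean g}"

definition C0Z :: "('a \<Rightarrow> 'a \<Rightarrow> bool) \<Rightarrow> ('a option \<times> ('a \<Rightarrow> bool) \<Rightarrow> int) set" where
  "C0Z A = {g. continuous_map (subtopology ambient (Gamma A)) euclidean g \<and>
               (\<forall>e::real. e > 0 \<longrightarrow>
                  compactin (subtopology ambient (Gamma A))
                    {x \<in> Gamma A. e \<le> real_of_int \<bar>g x\<bar>})}"

end

(*
  The generators delta_i and rho_i are the traces on G, embedded as j |-> (j, c_j), of indicator
  functions of clopen subsets of the compact ambient space, and these vanish at star_pt. Since the
  continuous integer-valued functions form a ring, every element of the rings extends continuously
  to GammaT, vanishing at star_pt in the non-unital case.

  Conversely, a continuous integer-valued function on the compact space GammaT is constant on each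
  member of a finite cover by cylinders (first coordinate in a finite or cofinite set, finitely many
  entries of the column prescribed). The trace on G of such a cylinder is a polynomial in the
  delta_i, rho_i and 1, and gluing along the cover exhibits the function as an element of the
  unital ring.

  For the non-unital ring write f = n + r with r in R_A. If star_pt is not in GammaT, a
  neighbourhood of star_pt missing G shows that 1 already lies in R_A; otherwise n is the value at
  star_pt of the extension of f, which is 0 because G is dense in GammaT. Finally, C_0(Gamma; Z)
  corresponds to the functions in C(GammaT; Z) vanishing at star_pt.
*)

theory Submission
  imports Defs
begin

section \<open>Integer-valued continuous functions\<close>

lemma continuous_map_int_iff:
  "continuous_map X euclidean (f :: 'b \<Rightarrow> int) \<longleftrightarrow> (\<forall>n. openin X {x \<in> topspace X. f x = n})"
proof
  assume "continuous_map X euclidean f"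
  then show "\<forall>n. openin X {x \<in> topspace X. f x = n}"
    using openin_continuous_map_preimage[of X euclidean f "{_}"] by (simp add: open_discrete)
next
  assume levels: "\<forall>n. openin X {x \<in> topspace X. f x = n}"
  have "{x \<in> topspace X. f x \<in> U} = (\<Union>n\<in>U. {x \<in> topspace X. f x = n})" for U
    by auto
  with levels show "continuous_map X euclidean f"
    unfolding continuous_map_def by auto
qed

lemma continuous_map_indicator_clopen:
  assumes "openin X S" "closedin X S"
  shows "continuous_map X euclidean (indicator S :: 'b \<Rightarrow> int)"
proof -
  have "{x \<in> topspace X. indicator S x = n} =
      (if n = 1 then S else if n = 0 then topspace X - S else {})" for n :: int
    using openin_subset[OF assms(1)] by (auto simp: indicator_def)
  then show ?thesis
    unfolding continuous_map_int_iff using assms by (simp add: openin_diff)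
qed

lemma Hausdorff_space_euclidean_t2: "Hausdorff_space (euclidean :: 'a::t2_space topology)"
  unfolding Hausdorff_space_def disjnt_def by (simp add: separation_t2)

lemma compactin_superlevel_set_punctured:
  assumes "compact_space X" "continuous_map X euclidean (g :: 'b \<Rightarrow> int)" "g p = 0" "e > 0"
  shows "compactin (subtopology X (topspace X - {p})) {x \<in> topspace X - {p}. e \<le> real_of_int \<bar>g x\<bar>}"
proof -
  have "closedin X {x \<in> topspace X. g x \<in> {n. e \<le> real_of_int \<bar>n\<bar>}}"
    using assms(2) by (rule closedin_continuous_map_preimage) (simp add: closed_def open_discrete)
  moreover have "{x \<in> topspace X. g x \<in> {n. e \<le> real_of_int \<bar>n\<bar>}} =
      {x \<in> topspace X - {p}. e \<le> real_of_int \<bar>g x\<bar>}"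
    using assms(3,4) by auto
  ultimately show ?thesis
    using assms(1) by (auto simp: closedin_compact_space compactin_subtopology)
qed

lemma continuous_map_fun_upd_zero:
  assumes "Hausdorff_space X"
    and cont: "continuous_map (subtopology X (topspace X - {p})) euclidean (g :: 'b \<Rightarrow> int)"
    and compact: "compactin (subtopology X (topspace X - {p})) {x \<in> topspace X - {p}. 1 \<le> real_of_int \<bar>g x\<bar>}"
  shows "continuous_map X euclidean (g(p := 0))"
  unfolding continuous_map_int_iff
proof
  fix n :: int
  show "openin X {x \<in> topspace X. (g(p := 0)) x = n}"
  proof (cases "n = 0")
    case True
    \<comment> \<open>for integer values, 1 \<le> |g x| just says g x \<noteq> 0\<close>
    let ?K = "{x \<in> topspace X - {p}. 1 \<le> real_of_int \<bar>g x\<bar>}"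
    have "closedin X ?K"
      using compact assms(1) by (simp add: compactin_subtopology compactin_imp_closedin)
    moreover have "{x \<in> topspace X. (g(p := 0)) x = n} = topspace X - ?K"
      using True by auto
    ultimately show ?thesis by (simp add: openin_diff)
  next
    case False
    have "openin (subtopology X (topspace X - {p})) {x \<in> topspace X - {p}. g x = n}"
      using cont by (simp add: continuous_map_int_iff)
    moreover have "openin X (topspace X - {p})"
      using assms(1) Hausdorff_imp_t1_space t1_space_openin_delete_alt by blast
    moreover have "{x \<in> topspace X. (g(p := 0)) x = n} = {x \<in> topspace X - {p}. g x = n}"
      using False by auto
    ultimately show ?thesis by (metis openin_trans_full)
  qed
qed

section \<open>Rings of integer-valued functions\<close>

locale fun_subring =
  fixes R :: "('b \<Rightarrow> int) set"
  assumes zero_mem: "(\<lambda>_. 0) \<in> R"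
    and uminus_mem: "f \<in> R \<Longrightarrow> (\<lambda>x. - f x) \<in> R"
    and add_mem: "f \<in> R \<Longrightarrow> g \<in> R \<Longrightarrow> (\<lambda>x. f x + g x) \<in> R"
    and mult_mem: "f \<in> R \<Longrightarrow> g \<in> R \<Longrightarrow> (\<lambda>x. f x * g x) \<in> R"
begin

lemma diff_mem: "f \<in> R \<Longrightarrow> g \<in> R \<Longrightarrow> (\<lambda>x. f x - g x) \<in> R"
  using add_mem[OF _ uminus_mem, of f g] by simp

lemma int_mult_mem:
  assumes "f \<in> R"
  shows "(\<lambda>x. c * f x) \<in> R"
proof -
  have nat_mult: "(\<lambda>x. int n * f x) \<in> R" for n
  proof (induction n)
    case 0
    show ?case using zero_mem by simp
  next
    case (Suc n)
    then show ?case using add_mem[OF assms Suc] by (simp add: algebra_simps)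
  qed
  show ?thesis
  proof (cases "c \<ge> 0")
    case True
    then show ?thesis using nat_mult[of "nat c"] by simp
  next
    case False
    then show ?thesis using uminus_mem[OF nat_mult[of "nat (- c)"]] by simp
  qed
qed

lemma indicator_Int_mem: "indicator S \<in> R \<Longrightarrow> indicator T \<in> R \<Longrightarrow> indicator (S \<inter> T) \<in> R"
  using mult_mem[of "indicator S" "indicator T"] by (simp add: indicator_inter_arith[abs_def])

lemma indicator_Un_mem: "indicator S \<in> R \<Longrightarrow> indicator T \<in> R \<Longrightarrow> indicator (S \<union> T) \<in> R"
  using diff_mem[OF add_mem mult_mem, of "indicator S" "indicator T"]
  by (simp add: indicator_union_arith[abs_def])

lemma indicator_Compl_mem: "(\<lambda>_. 1) \<in> R \<Longrightarrow> indicator S \<in> R \<Longrightarrow> indicator (- S) \<in> R"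
  using diff_mem[of "\<lambda>_. 1" "indicator S"] by (simp add: indicator_compl[abs_def])

lemma indicator_UN_mem:
  "finite I \<Longrightarrow> (\<And>i. i \<in> I \<Longrightarrow> indicator (T i) \<in> R) \<Longrightarrow> indicator (\<Union>i\<in>I. T i) \<in> R"
proof (induction I rule: finite_induct)
  case empty
  show ?case using zero_mem by (simp add: indicator_def)
next
  case (insert i I)
  then show ?case using indicator_Un_mem[of "T i" "\<Union>i\<in>I. T i"] by simp
qed

lemma indicator_INT_mem:
  assumes "(\<lambda>_. 1) \<in> R"
  shows "finite I \<Longrightarrow> (\<And>i. i \<in> I \<Longrightarrow> indicator (T i) \<in> R) \<Longrightarrow> indicator (\<Inter>i\<in>I. T i) \<in> R"
proof (induction I rule: finite_induct)
  case empty
  show ?case using assms by simp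
next
  case (insert i I)
  then show ?case using indicator_Int_mem[of "T i" "\<Inter>i\<in>I. T i"] by simp
qed

lemma mem_if_constant_on_finite_cover:
  assumes one: "(\<lambda>_. 1) \<in> R" and "finite P"
    and indicators: "\<And>p. p \<in> P \<Longrightarrow> indicator (T p) \<in> R"
    and const_on: "\<And>p x. p \<in> P \<Longrightarrow> x \<in> T p \<Longrightarrow> f x = v p"
    and cover: "(\<Union>p\<in>P. T p) = UNIV"
  shows "f \<in> R"
proof -
  have "\<exists>h\<in>R. \<forall>x\<in>\<Union>p\<in>Q. T p. h x = f x" if "Q \<subseteq> P" for Q
    using finite_subset[OF that \<open>finite P\<close>] that
  proof (induction Q rule: finite_induct)
    case empty
    show ?case using zero_mem by blast
  next
    case (insert q Q)
    then obtain h where h: "h \<in> R" "\<forall>x\<in>\<Union>p\<in>Q. T p. h x = f x"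
      by auto
    define h' where "h' x = v q * indicator (T q) x + indicator (- T q) x * h x" for x
    show ?case
    proof (rule bexI[of _ h'])
      show "h' \<in> R"
        using insert.prems h(1) unfolding h'_def
        by (intro add_mem int_mult_mem mult_mem indicator_Compl_mem one indicators) auto
      show "\<forall>x\<in>\<Union>p\<in>insert q Q. T p. h' x = f x"
      proof
        fix x
        assume x: "x \<in> (\<Union>p\<in>insert q Q. T p)"
        show "h' x = f x"
        proof (cases "x \<in> T q")
          case True
          then show ?thesis using const_on[of q x] insert.prems by (simp add: h'_def)
        next
          case False
          with x h(2) have "h x = f x" by blast
          with False show ?thesis by (simp add: h'_def)
        qed
      qed
    qed
  qed
  then obtain h where "h \<in> R" "\<forall>x\<in>\<Union>p\<in>P. T p. h x = f x"
    by (meson order_refl)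
  with cover have "h = f" by auto
  with \<open>h \<in> R\<close> show ?thesis by simp
qed

end

lemma fun_subring_ring_gen: "fun_subring (ring_gen S)"
  by unfold_locales (fact ring_gen.intros)+

lemma ring_gen_minimal:
  assumes "fun_subring R" "S \<subseteq> R"
  shows "ring_gen S \<subseteq> R"
proof
  interpret fun_subring R by (fact assms(1))
  fix f
  assume "f \<in> ring_gen S"
  then show "f \<in> R"
    by induction (use assms(2) in \<open>auto intro: zero_mem uminus_mem add_mem mult_mem\<close>)
qed

lemma ring_gen_insert_one:
  assumes "f \<in> ring_gen (insert (\<lambda>_. 1) S)"
  shows "\<exists>n. \<exists>r\<in>ring_gen S. f = (\<lambda>x. n + r x)"
  using assms
proof induction
  case (gen f)
  then consider "f = (\<lambda>_. 1)" | "f \<in> S" by blast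
  then show ?case
  proof cases
    case 1
    then show ?thesis by (intro exI[of _ 1] bexI[OF _ ring_gen.zero]) simp
  next
    case 2
    then show ?thesis by (intro exI[of _ 0] bexI[OF _ ring_gen.gen]) simp_all
  qed
next
  case zero
  show ?case by (intro exI[of _ 0] bexI[OF _ ring_gen.zero]) simp
next
  case (neg f)
  then obtain n r where "r \<in> ring_gen S" "f = (\<lambda>x. n + r x)" by blast
  then show ?case by (intro exI[of _ "- n"] bexI[OF _ ring_gen.neg]) auto
next
  case (add f g)
  then obtain n r m s where "r \<in> ring_gen S" "f = (\<lambda>x. n + r x)" "s \<in> ring_gen S" "g = (\<lambda>x. m + s x)"
    by blast
  then show ?case
    by (intro exI[of _ "n + m"] bexI[of _ "\<lambda>x. r x + s x"]) (auto intro: ring_gen.add)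
next
  case (mult f g)
  interpret fun_subring "ring_gen S" by (fact fun_subring_ring_gen)
  from mult obtain n r m s
    where "r \<in> ring_gen S" "f = (\<lambda>x. n + r x)" "s \<in> ring_gen S" "g = (\<lambda>x. m + s x)"
    by blast
  then show ?case
    by (intro exI[of _ "n * m"] bexI[of _ "\<lambda>x. n * s x + m * r x + r x * s x"])
      (auto intro!: add_mem mult_mem int_mult_mem simp: algebra_simps)
qed

lemma fun_subring_continuous_int: "fun_subring {g. continuous_map X euclidean (g :: 'b \<Rightarrow> int)}"
proof unfold_locales
  fix f g :: "'b \<Rightarrow> int"
  assume f: "f \<in> {g. continuous_map X euclidean g}" and g: "g \<in> {g. continuous_map X euclidean g}"
  then show "(\<lambda>x. f x + g x) \<in> {g. continuous_map X euclidean g}"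
    "(\<lambda>x. f x * g x) \<in> {g. continuous_map X euclidean g}"
    by (simp_all add: continuous_map_atin tendsto_add tendsto_mult)
  have "continuous_map X euclidean (uminus \<circ> f)"
    using f by (intro continuous_map_compose[of _ euclidean]) simp_all
  then show "(\<lambda>x. - f x) \<in> {g. continuous_map X euclidean g}"
    by (simp add: o_def)
qed simp

lemma fun_subring_vanishing_at: "fun_subring R \<Longrightarrow> fun_subring {g \<in> R. g p = 0}"
  by (simp add: fun_subring_def)

lemma fun_subring_image_comp:
  assumes "fun_subring R"
  shows "fun_subring ((\<lambda>g. g \<circ> e) ` R)"
proof -
  interpret fun_subring R by fact
  show ?thesis
  proof unfold_locales
    show "(\<lambda>_. 0) \<in> (\<lambda>g. g \<circ> e) ` R"
      using zero_mem by (auto simp: o_def intro: rev_image_eqI)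
    show "(\<lambda>x. - f x) \<in> (\<lambda>g. g \<circ> e) ` R" if "f \<in> (\<lambda>g. g \<circ> e) ` R" for f
      using that uminus_mem by (auto simp: o_def intro: rev_image_eqI)
    show "(\<lambda>x. f x + g x) \<in> (\<lambda>g. g \<circ> e) ` R" "(\<lambda>x. f x * g x) \<in> (\<lambda>g. g \<circ> e) ` R"
      if "f \<in> (\<lambda>g. g \<circ> e) ` R" "g \<in> (\<lambda>g. g \<circ> e) ` R" for f g
      using that add_mem mult_mem by (auto simp: o_def intro: rev_image_eqI)
  qed
qed

section \<open>The one-point compactification and cylinders\<close>

lemma openin_opt_top: "openin opt_top U \<longleftrightarrow> (None \<in> U \<longrightarrow> finite (- U))"
  unfolding opt_top_def topology_inverse'[OF istopology_opt_open] by (simp add: opt_open_def)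

lemma topspace_opt_top [simp]: "topspace opt_top = UNIV"
  using openin_subset[of opt_top UNIV] by (auto simp: openin_opt_top)

lemma Hausdorff_space_opt_top: "Hausdorff_space opt_top"
  unfolding Hausdorff_space_def
proof (intro allI impI, elim conjE)
  fix x y :: "'a option"
  assume "x \<noteq> y"
  show "\<exists>U V. openin opt_top U \<and> openin opt_top V \<and> x \<in> U \<and> y \<in> V \<and> disjnt U V"
  proof (cases x)
    case None
    with \<open>x \<noteq> y\<close> obtain b where "y = Some b" by (cases y) auto
    with None show ?thesis
      by (intro exI[of _ "- {Some b}"] exI[of _ "{Some b}"]) (auto simp: openin_opt_top disjnt_def)
  next
    case (Some a)
    with \<open>x \<noteq> y\<close> show ?thesis
      by (intro exI[of _ "{Some a}"] exI[of _ "- {Some a}"]) (auto simp: openin_opt_top disjnt_def)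
  qed
qed

lemma compact_space_opt_top: "compact_space opt_top"
  unfolding compact_space_def compactin_def
proof (intro conjI allI impI)
  fix \<U> :: "'a option set set"
  assume \<U>: "(\<forall>U\<in>\<U>. openin opt_top U) \<and> topspace opt_top \<subseteq> \<Union>\<U>"
  then have "\<forall>x. \<exists>U\<in>\<U>. x \<in> U"
    by auto
  then obtain h where h: "\<And>x. h x \<in> \<U> \<and> x \<in> h x"
    by metis
  with \<U> have "finite (- h None)"
    by (auto simp: openin_opt_top)
  with h show "\<exists>\<F>. finite \<F> \<and> \<F> \<subseteq> \<U> \<and> topspace opt_top \<subseteq> \<Union>\<F>"
    by (intro exI[of _ "h ` insert None (- h None)"]) auto
qed auto

lemma opt_top_nhds_finite_or_cofinite:
  assumes "openin opt_top U" "y \<in> U"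
  obtains V where "openin opt_top V" "y \<in> V" "V \<subseteq> U" "finite V \<or> finite (- V)"
proof (cases y)
  case None
  with assms show ?thesis by (intro that[of U]) (auto simp: openin_opt_top)
next
  case (Some a)
  with assms show ?thesis by (intro that[of "{y}"]) (auto simp: openin_opt_top)
qed

lemma topspace_ambient [simp]: "topspace ambient = UNIV"
  unfolding ambient_def by (simp add: PiE_UNIV_domain)

lemma Hausdorff_space_ambient: "Hausdorff_space ambient"
  unfolding ambient_def
  by (simp add: Hausdorff_space_prod_topology Hausdorff_space_opt_top Hausdorff_space_product_topology)

lemma compact_space_ambient: "compact_space ambient"
  unfolding ambient_def
  by (simp add: compact_space_prod_topology compact_space_opt_top compact_space_product_topology
      compact_space_discrete_topology)

lemma compactin_GammaT: "compactin ambient (GammaT A)"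
  unfolding GammaT_def by (simp add: closedin_compact_space compact_space_ambient)

lemma emb_in_GammaT: "emb A j \<in> GammaT A"
  unfolding GammaT_def by (rule closure_of_subset[THEN subsetD]) auto

lemma emb_neq_star_pt [simp]: "emb A j \<noteq> star_pt"
  by (simp add: emb_def star_pt_def)

definition cylinder :: "'a option set \<Rightarrow> 'a set \<Rightarrow> ('a \<Rightarrow> bool) \<Rightarrow> ('a option \<times> ('a \<Rightarrow> bool)) set"
  where "cylinder U I c = {x. fst x \<in> U \<and> (\<forall>i\<in>I. snd x i = c i)}"

lemma emb_in_cylinder_iff: "emb A j \<in> cylinder U I c \<longleftrightarrow> Some j \<in> U \<and> (\<forall>i\<in>I. A i j = c i)"
  by (simp add: cylinder_def emb_def col_def)

lemma continuous_map_ambient_fst: "continuous_map ambient opt_top fst"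
  unfolding ambient_def by (rule continuous_map_fst)

lemma continuous_map_ambient_coordinate:
  "continuous_map ambient (discrete_topology UNIV) (\<lambda>x. snd x i)"
  unfolding ambient_def
  by (rule continuous_map_compose[OF continuous_map_snd continuous_map_product_projection,
        unfolded o_def]) simp

lemma openin_cylinder:
  assumes "openin opt_top U" "finite I"
  shows "openin ambient (cylinder U I c)"
proof -
  have "openin ambient {x. fst x \<in> U}"
    using openin_continuous_map_preimage[OF continuous_map_ambient_fst assms(1)] by simp
  moreover have "openin ambient {x. snd x i = c i}" for i
    using openin_continuous_map_preimage[OF continuous_map_ambient_coordinate[of i], of "{c i}"] by simp
  then have "openin ambient ((\<Inter>i\<in>I. {x. snd x i = c i}) \<inter> topspace ambient)"
    using assms(2) by blast
  moreover have "cylinder U I c = {x. fst x \<in> U} \<inter> ((\<Inter>i\<in>I. {x. snd x i = c i}) \<inter> topspace ambient)"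
    by (auto simp: cylinder_def)
  ultimately show ?thesis by auto
qed

lemma cylinder_nhds:
  assumes "openin ambient W" "x \<in> W"
  obtains U I where "openin opt_top U" "fst x \<in> U" "finite U \<or> finite (- U)" "finite I"
    "cylinder U I (snd x) \<subseteq> W"
proof -
  obtain U V where U: "openin opt_top U" "fst x \<in> U"
    and V: "openin (product_topology (\<lambda>_. discrete_topology UNIV) UNIV) V" "snd x \<in> V"
    and UV: "U \<times> V \<subseteq> W"
    using assms unfolding ambient_def openin_prod_topology_alt by (metis prod.collapse)
  obtain Z where Z: "finite {i. Z i \<noteq> UNIV}" "snd x \<in> Pi\<^sub>E UNIV Z" "Pi\<^sub>E UNIV Z \<subseteq> V"
    using V unfolding openin_product_topology_alt by auto
  obtain U' where U': "openin opt_top U'" "fst x \<in> U'" "U' \<subseteq> U" "finite U' \<or> finite (- U')"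
    using opt_top_nhds_finite_or_cofinite U by blast
  have "cylinder U' {i. Z i \<noteq> UNIV} (snd x) \<subseteq> U' \<times> Pi\<^sub>E UNIV Z"
  proof
    fix y
    assume y: "y \<in> cylinder U' {i. Z i \<noteq> UNIV} (snd x)"
    have "snd y i \<in> Z i" for i
      using y Z(2) by (cases "Z i = UNIV") (auto simp: cylinder_def PiE_UNIV_domain)
    with y show "y \<in> U' \<times> Pi\<^sub>E UNIV Z"
      by (auto simp: cylinder_def PiE_UNIV_domain mem_Times_iff)
  qed
  also have "\<dots> \<subseteq> W"
    using U'(3) Z(3) UV by blast
  finally show ?thesis
    using U' Z(1) by (intro that) auto
qed

section \<open>The rings generated by rows and points\<close>

lemma fun_subring_ringR: "fun_subring (ringR A)"
  unfolding ringR_def by (rule fun_subring_ring_gen)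

lemma fun_subring_ringRT: "fun_subring (ringRT A)"
  unfolding ringRT_def by (rule fun_subring_ring_gen)

lemma delta_eq_indicator: "delta i = indicator {i}"
  by (auto simp: delta_def indicator_def)

lemma rho_eq_indicator: "rho A i = indicator {j. A i j}"
  by (auto simp: rho_def indicator_def)

lemma delta_in_ringR: "delta i \<in> ringR A"
  unfolding ringR_def by (rule ring_gen.gen) blast

lemma rho_in_ringR: "rho A i \<in> ringR A"
  unfolding ringR_def by (rule ring_gen.gen) blast

lemma ringR_subset_ringRT: "ringR A \<subseteq> ringRT A"
  unfolding ringR_def ringRT_def by (rule ring_gen_minimal[OF fun_subring_ring_gen]) (auto intro: ring_gen.gen)

lemma one_in_ringRT: "(\<lambda>_. 1) \<in> ringRT A"
  unfolding ringRT_def by (rule ring_gen.gen) blast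

lemma ringRT_eq_ring_gen_insert_one:
  "ringRT A = ring_gen (insert (\<lambda>_. 1) ({delta i |i. True} \<union> {rho A i |i. True}))"
  by (simp add: ringRT_def)

lemma indicator_finite_in_ringR:
  assumes "finite F"
  shows "indicator F \<in> ringR A"
proof -
  interpret fun_subring "ringR A" by (fact fun_subring_ringR)
  have "indicator (\<Union>j\<in>F. {j}) \<in> ringR A"
    using assms delta_in_ringR by (intro indicator_UN_mem) (simp_all add: delta_eq_indicator)
  then show ?thesis by simp
qed

lemma indicator_trace_cylinder_in_ringRT:
  assumes "finite U \<or> finite (- U)" "finite I"
  shows "indicator {j. emb A j \<in> cylinder U I c} \<in> ringRT A"
proof -
  interpret fun_subring "ringRT A" by (fact fun_subring_ringRT)
  have finite_in_ringRT: "indicator F \<in> ringRT A" if "finite F" for F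
    using indicator_finite_in_ringR[OF that] ringR_subset_ringRT by blast
  have "indicator (Some -` U) \<in> ringRT A"
  proof (cases "finite U")
    case True
    then show ?thesis by (intro finite_in_ringRT finite_vimageI) simp_all
  next
    case False
    with assms(1) have "indicator (- (Some -` (- U))) \<in> ringRT A"
      by (intro indicator_Compl_mem one_in_ringRT finite_in_ringRT finite_vimageI) simp_all
    then show ?thesis by (simp add: vimage_Compl)
  qed
  moreover have "indicator {j. A i j = c i} \<in> ringRT A" for i
  proof -
    have "indicator {j. A i j} \<in> ringRT A"
      using rho_in_ringR[of A i] ringR_subset_ringRT[of A] by (auto simp: rho_eq_indicator)
    then have "indicator {j. A i j} \<in> ringRT A" "indicator (- {j. A i j}) \<in> ringRT A"
      by (auto intro: indicator_Compl_mem one_in_ringRT)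
    then show ?thesis by (cases "c i") (simp_all add: Collect_neg_eq)
  qed
  ultimately have "indicator (Some -` U \<inter> (\<Inter>i\<in>I. {j. A i j = c i})) \<in> ringRT A"
    using assms(2) by (intro indicator_Int_mem indicator_INT_mem one_in_ringRT)
  moreover have "{j. emb A j \<in> cylinder U I c} = Some -` U \<inter> (\<Inter>i\<in>I. {j. A i j = c i})"
    by (auto simp: emb_in_cylinder_iff)
  ultimately show ?thesis by simp
qed

lemma one_in_ringR_if_star_pt_notin_GammaT:
  assumes "star_pt \<notin> GammaT A"
  shows "(\<lambda>_. 1) \<in> ringR A"
proof -
  interpret fun_subring "ringR A" by (fact fun_subring_ringR)
  obtain W where W: "openin ambient W" "star_pt \<in> W" "W \<inter> range (emb A) = {}"
    using assms unfolding GammaT_def in_closure_of by auto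
  then obtain U I where U: "openin opt_top U" "None \<in> U" and I: "finite I"
    and sub: "cylinder U I (\<lambda>_. False) \<subseteq> W"
    by (auto simp: star_pt_def elim: cylinder_nhds)
  have "finite (- U)"
    using U by (simp add: openin_opt_top)
  then have "indicator (Some -` (- U)) \<in> ringR A"
    by (intro indicator_finite_in_ringR finite_vimageI) simp_all
  moreover have "indicator (\<Union>i\<in>I. {j. A i j}) \<in> ringR A"
    using I rho_in_ringR[of A] by (intro indicator_UN_mem) (simp_all add: rho_eq_indicator)
  ultimately have "indicator (Some -` (- U) \<union> (\<Union>i\<in>I. {j. A i j})) \<in> ringR A"
    by (rule indicator_Un_mem)
  moreover have "Some -` (- U) \<union> (\<Union>i\<in>I. {j. A i j}) = UNIV"
  proof -
    have "emb A j \<notin> cylinder U I (\<lambda>_. False)" for j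
      using sub W(3) by blast
    then show ?thesis by (auto simp: emb_in_cylinder_iff)
  qed
  ultimately show ?thesis by simp
qed

section \<open>Integer-valued continuous functions on the closure of the graph\<close>

lemma fun_subring_CZ: "fun_subring (CZ A)"
  unfolding CZ_def by (rule fun_subring_continuous_int)

lemma indicator_fst_eq_Some_in_CZ: "indicator {x. fst x = Some i} \<in> CZ A"
proof -
  have "openin opt_top {Some i}" "closedin opt_top {Some i}"
    by (auto simp: openin_opt_top closedin_def)
  then have "openin ambient {x. fst x = Some i}" "closedin ambient {x. fst x = Some i}"
    using openin_continuous_map_preimage[OF continuous_map_ambient_fst]
      closedin_continuous_map_preimage[OF continuous_map_ambient_fst] by force+
  then show ?thesis
    unfolding CZ_def by (auto intro: continuous_map_from_subtopology continuous_map_indicator_clopen)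
qed

lemma indicator_snd_in_CZ: "indicator {x. snd x i} \<in> CZ A"
proof -
  have "openin ambient {x. snd x i}" "closedin ambient {x. snd x i}"
    using openin_continuous_map_preimage[OF continuous_map_ambient_coordinate[of i], of "{True}"]
      closedin_continuous_map_preimage[OF continuous_map_ambient_coordinate[of i], of "{True}"] by simp_all
  then show ?thesis
    unfolding CZ_def by (auto intro: continuous_map_from_subtopology continuous_map_indicator_clopen)
qed

lemma delta_eq_comp_emb: "delta i = indicator {x. fst x = Some i} \<circ> emb A"
  by (auto simp: delta_def emb_def indicator_def)

lemma rho_eq_comp_emb: "rho A i = indicator {x. snd x i} \<circ> emb A"
  by (auto simp: rho_def emb_def col_def indicator_def)

lemma ringR_subset_image_comp_emb: "ringR A \<subseteq> (\<lambda>g. g \<circ> emb A) ` {g \<in> CZ A. g star_pt = 0}"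
  unfolding ringR_def
proof (rule ring_gen_minimal)
  show "fun_subring ((\<lambda>g. g \<circ> emb A) ` {g \<in> CZ A. g star_pt = 0})"
    by (intro fun_subring_image_comp fun_subring_vanishing_at fun_subring_CZ)
  have "delta i \<in> (\<lambda>g. g \<circ> emb A) ` {g \<in> CZ A. g star_pt = 0}" for i
    unfolding delta_eq_comp_emb[of i A]
    by (rule image_eqI[OF refl]) (simp add: indicator_fst_eq_Some_in_CZ star_pt_def)
  moreover have "rho A i \<in> (\<lambda>g. g \<circ> emb A) ` {g \<in> CZ A. g star_pt = 0}" for i
    unfolding rho_eq_comp_emb[of A i]
    by (rule image_eqI[OF refl]) (simp add: indicator_snd_in_CZ star_pt_def)
  ultimately show "{delta i |i. True} \<union> {rho A i |i. True} \<subseteq> (\<lambda>g. g \<circ> emb A) ` {g \<in> CZ A. g star_pt = 0}"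
    by blast
qed

lemma ringRT_subset_image_comp_emb: "ringRT A \<subseteq> (\<lambda>g. g \<circ> emb A) ` CZ A"
  unfolding ringRT_eq_ring_gen_insert_one
proof (rule ring_gen_minimal)
  show "fun_subring ((\<lambda>g. g \<circ> emb A) ` CZ A)"
    by (intro fun_subring_image_comp fun_subring_CZ)
  have "(\<lambda>_. 1) \<in> CZ A"
    by (simp add: CZ_def)
  then have "(\<lambda>_. 1) \<in> (\<lambda>g. g \<circ> emb A) ` CZ A"
    by (rule rev_image_eqI) (simp add: o_def)
  moreover have "{delta i |i. True} \<union> {rho A i |i. True} \<subseteq> ringR A"
    by (auto intro: delta_in_ringR rho_in_ringR)
  moreover have "ringR A \<subseteq> (\<lambda>g. g \<circ> emb A) ` CZ A"
    using ringR_subset_image_comp_emb by blast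
  ultimately show "insert (\<lambda>_. 1) ({delta i |i. True} \<union> {rho A i |i. True}) \<subseteq> (\<lambda>g. g \<circ> emb A) ` CZ A"
    by blast
qed

lemma CZ_locally_constant:
  assumes "g \<in> CZ A" "p \<in> GammaT A"
  obtains U I where "openin opt_top U" "fst p \<in> U" "finite U \<or> finite (- U)" "finite I"
    "\<And>x. x \<in> GammaT A \<Longrightarrow> x \<in> cylinder U I (snd p) \<Longrightarrow> g x = g p"
proof -
  have "openin (subtopology ambient (GammaT A)) {x \<in> GammaT A. g x = g p}"
    using assms(1) by (simp add: CZ_def continuous_map_int_iff)
  then obtain W where W: "openin ambient W" "{x \<in> GammaT A. g x = g p} = W \<inter> GammaT A"
    unfolding openin_subtopology by blast
  moreover have "p \<in> W"
    using W(2) assms(2) by blast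
  ultimately obtain U I where "openin opt_top U" "fst p \<in> U" "finite U \<or> finite (- U)" "finite I"
    "cylinder U I (snd p) \<subseteq> W"
    by (elim cylinder_nhds)
  with W(2) show ?thesis
    by (intro that) blast+
qed

lemma CZ_comp_emb_in_ringRT:
  assumes g: "g \<in> CZ A"
  shows "g \<circ> emb A \<in> ringRT A"
proof -
  interpret fun_subring "ringRT A" by (fact fun_subring_ringRT)
  have "\<exists>U I. openin opt_top U \<and> fst p \<in> U \<and> (finite U \<or> finite (- U)) \<and> finite I \<and>
      (\<forall>x\<in>GammaT A \<inter> cylinder U I (snd p). g x = g p)" if "p \<in> GammaT A" for p
    by (rule CZ_locally_constant[OF g that]) blast
  then obtain U I where U: "\<And>p. p \<in> GammaT A \<Longrightarrow> openin opt_top (U p) \<and> fst p \<in> U p"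
    and finite: "\<And>p. p \<in> GammaT A \<Longrightarrow> (finite (U p) \<or> finite (- U p)) \<and> finite (I p)"
    and const: "\<And>p x. p \<in> GammaT A \<Longrightarrow> x \<in> GammaT A \<inter> cylinder (U p) (I p) (snd p) \<Longrightarrow> g x = g p"
    by metis
  define N where "N p = cylinder (U p) (I p) (snd p)" for p
  have "\<forall>B\<in>N ` GammaT A. openin ambient B"
    using U finite by (auto simp: N_def intro: openin_cylinder)
  moreover have "GammaT A \<subseteq> \<Union>(N ` GammaT A)"
    using U by (force simp: N_def cylinder_def)
  ultimately obtain \<F> where "finite \<F>" "\<F> \<subseteq> N ` GammaT A" "GammaT A \<subseteq> \<Union>\<F>"
    using compactin_GammaT[of A] unfolding compactin_def by meson
  then obtain P where P: "P \<subseteq> GammaT A" "finite P" "GammaT A \<subseteq> (\<Union>p\<in>P. N p)"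
    by (metis finite_subset_image)
  show ?thesis
  proof (rule mem_if_constant_on_finite_cover[OF one_in_ringRT \<open>finite P\<close>])
    show "indicator {j. emb A j \<in> N p} \<in> ringRT A" if "p \<in> P" for p
      using finite that P(1) unfolding N_def by (blast intro: indicator_trace_cylinder_in_ringRT)
    show "(g \<circ> emb A) j = g p" if "p \<in> P" "j \<in> {j. emb A j \<in> N p}" for p j
      using const[of p "emb A j"] that P(1) emb_in_GammaT[of A j] by (auto simp: N_def)
    show "(\<Union>p\<in>P. {j. emb A j \<in> N p}) = UNIV"
      using P(3) emb_in_GammaT[of A] by blast
  qed
qed

lemma closure_of_range_emb: "subtopology ambient (GammaT A) closure_of range (emb A) = GammaT A"
proof -
  have "GammaT A \<inter> range (emb A) = range (emb A)"
    using emb_in_GammaT[of A] by blast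
  then show ?thesis
    unfolding closure_of_subtopology by (simp add: GammaT_def)
qed

lemma CZ_eq_on_GammaT:
  assumes "g \<in> CZ A" "h \<in> CZ A" "g \<circ> emb A = h \<circ> emb A" "x \<in> GammaT A"
  shows "g x = h x"
proof (rule forall_in_closure_of_eq[where X = "subtopology ambient (GammaT A)" and S = "range (emb A)"])
  show "x \<in> subtopology ambient (GammaT A) closure_of range (emb A)"
    using assms(4) by (simp add: closure_of_range_emb)
  show "continuous_map (subtopology ambient (GammaT A)) euclidean g"
    "continuous_map (subtopology ambient (GammaT A)) euclidean h"
    using assms(1,2) by (simp_all add: CZ_def)
  show "g y = h y" if "y \<in> range (emb A)" for y
    using that assms(3) by (auto simp: fun_eq_iff)
qed (rule Hausdorff_space_euclidean_t2)

lemma topspace_GammaT_Diff_star_pt: "topspace (subtopology ambient (GammaT A)) - {star_pt} = Gamma A"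
  by (simp add: Gamma_def)

lemma subtopology_GammaT_Gamma:
  "subtopology (subtopology ambient (GammaT A)) (Gamma A) = subtopology ambient (Gamma A)"
  by (simp add: subtopology_subtopology Gamma_def Int_absorb1 Diff_subset)

lemma fun_upd_star_pt_in_CZ_if_C0Z:
  assumes "g \<in> C0Z A"
  shows "g(star_pt := 0) \<in> CZ A"
proof -
  have "Hausdorff_space (subtopology ambient (GammaT A))"
    by (simp add: Hausdorff_space_subtopology Hausdorff_space_ambient)
  with assms show ?thesis
    using continuous_map_fun_upd_zero[of "subtopology ambient (GammaT A)" star_pt g]
    unfolding topspace_GammaT_Diff_star_pt subtopology_GammaT_Gamma by (simp add: C0Z_def CZ_def)
qed

lemma C0Z_if_CZ_vanishing_at_star_pt:
  assumes "g \<in> CZ A" "g star_pt = 0"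
  shows "g \<in> C0Z A"
proof -
  have cont: "continuous_map (subtopology ambient (GammaT A)) euclidean g"
    using assms(1) by (simp add: CZ_def)
  have "compact_space (subtopology ambient (GammaT A))"
    by (simp add: compact_space_subtopology compactin_GammaT)
  from compactin_superlevel_set_punctured[OF this cont assms(2)]
  have "compactin (subtopology ambient (Gamma A)) {x \<in> Gamma A. e \<le> real_of_int \<bar>g x\<bar>}"
    if "e > 0" for e
    using that unfolding topspace_GammaT_Diff_star_pt subtopology_GammaT_Gamma .
  moreover have "continuous_map (subtopology ambient (Gamma A)) euclidean g"
    using continuous_map_from_subtopology[OF cont, of "Gamma A"] by (simp add: subtopology_GammaT_Gamma)
  ultimately show ?thesis by (simp add: C0Z_def)
qed

lemma image_comp_emb_C0Z: "(\<lambda>g. g \<circ> emb A) ` C0Z A = (\<lambda>g. g \<circ> emb A) ` {g \<in> CZ A. g star_pt = 0}"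
proof (intro equalityI image_subsetI)
  fix g
  assume "g \<in> C0Z A"
  then show "g \<circ> emb A \<in> (\<lambda>g. g \<circ> emb A) ` {g \<in> CZ A. g star_pt = 0}"
    by (intro image_eqI[of _ _ "g(star_pt := 0)"]) (auto simp: fun_eq_iff fun_upd_star_pt_in_CZ_if_C0Z)
next
  fix g
  assume "g \<in> {g \<in> CZ A. g star_pt = 0}"
  then show "g \<circ> emb A \<in> (\<lambda>g. g \<circ> emb A) ` C0Z A"
    by (intro imageI) (simp add: C0Z_if_CZ_vanishing_at_star_pt)
qed

lemma ringRT_eq_image_comp_emb: "ringRT A = (\<lambda>g. g \<circ> emb A) ` CZ A"
  using ringRT_subset_image_comp_emb CZ_comp_emb_in_ringRT by blast

lemma ringRT_mem_const_add_ringR: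
  assumes "f \<in> ringRT A"
  obtains n r where "r \<in> ringR A" "f = (\<lambda>j. n + r j)"
  using ring_gen_insert_one assms unfolding ringRT_eq_ring_gen_insert_one ringR_def by blast

lemma const_eq_zero_if_star_pt_in_GammaT:
  assumes "star_pt \<in> GammaT A" "g \<in> CZ A" "g star_pt = 0" "r \<in> ringR A"
    and g_emb: "g \<circ> emb A = (\<lambda>j. n + r j)"
  shows "n = 0"
proof -
  from subsetD[OF ringR_subset_image_comp_emb assms(4)]
  obtain h where h: "h \<in> CZ A" "h star_pt = 0" "r = h \<circ> emb A"
    by blast
  have "(\<lambda>_. n) \<in> CZ A"
    by (simp add: CZ_def)
  with h(1) have "(\<lambda>x. n + h x) \<in> CZ A"
    by (intro fun_subring.add_mem[OF fun_subring_CZ])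
  moreover have "g \<circ> emb A = (\<lambda>x. n + h x) \<circ> emb A"
    using g_emb h(3) by (simp add: fun_eq_iff)
  ultimately have "g star_pt = n + h star_pt"
    using CZ_eq_on_GammaT[OF assms(2) _ _ assms(1)] by blast
  with assms(3) h(2) show "n = 0" by simp
qed

lemma ringR_eq_image_comp_emb: "ringR A = (\<lambda>g. g \<circ> emb A) ` {g \<in> CZ A. g star_pt = 0}"
proof (intro equalityI ringR_subset_image_comp_emb image_subsetI)
  interpret fun_subring "ringR A" by (fact fun_subring_ringR)
  fix g
  assume g: "g \<in> {g \<in> CZ A. g star_pt = 0}"
  then obtain n r where r: "r \<in> ringR A" and g_emb: "g \<circ> emb A = (\<lambda>j. n + r j)"
    using CZ_comp_emb_in_ringRT ringRT_mem_const_add_ringR by blast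
  show "g \<circ> emb A \<in> ringR A"
  proof (cases "star_pt \<in> GammaT A")
    case True
    with g r g_emb have "n = 0"
      by (blast intro: const_eq_zero_if_star_pt_in_GammaT)
    with g_emb r show ?thesis by simp
  next
    case False
    then have "(\<lambda>j. n * 1 + r j) \<in> ringR A"
      using r by (intro add_mem int_mult_mem one_in_ringR_if_star_pt_notin_GammaT)
    with g_emb show ?thesis by simp
  qed
qed

theorem proposition4p2:
  fixes A :: "'a \<Rightarrow> 'a \<Rightarrow> bool"
  shows "ringR A = (\<lambda>g. g \<circ> emb A) ` C0Z A \<and>
         ringRT A = (\<lambda>g. g \<circ> emb A) ` CZ A"
  by (simp add: image_comp_emb_C0Z ringR_eq_image_comp_emb ringRT_eq_image_comp_emb)

end
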